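(* Let $r\ge 2$ and $n\ge 1$, and let $G=K_{n,n,\dots,n}$ be the complete $r$-partite graph with $r$ parts of size $n$. Let $\mathcal{E}$ be the set of $r$-element subsets of $V(G)$ containing exactly one vertex from each part (so $|\mathcal{E}|=n^r$). Choose elements of $\mathcal{E}$ one at a time in a uniformly random order (without repetition), stopping as soon as every vertex of $G$ lies in at least one chosen element; let $G_\omega$ be the resulting $r$-uniform hypergraph on $V(G)$. Then the expected number of matchings in $G_\omega$ is $$(n!)^{r-1}\sum_{i=1}^r (-1)^{i-1}\frac{\binom{r}{i}}{\binom{n^r-(n-1)^i n^{r-i}+n-1}{n}}.$$
   Context: A matching in an $r$-uniform hypergraph on vertex set $V$ is a set $M$ of its edges such that every vertex of $V$ lies in exactly one edge of $M$. *)

theory Defs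
  imports "HOL-Combinatorics.Multiset_Permutations" Complex_Main
begin

definition kpart_vertices :: "nat \<Rightarrow> nat \<Rightarrow> (nat \<times> nat) set" where
  "kpart_vertices r n = {(j, v). j < r \<and> v < n}"

definition transversal_edges :: "nat \<Rightarrow> nat \<Rightarrow> (nat \<times> nat) set set" where
  "transversal_edges r n =
     {e. e \<subseteq> kpart_vertices r n \<and> card e = r \<and> (\<forall>j<r. card {v. (j, v) \<in> e} = 1)}"

definition stop_index :: "'a set \<Rightarrow> 'a set list \<Rightarrow> nat" where
  "stop_index V xs = (LEAST k. V \<subseteq> \<Union> (set (take k xs)))"

definition G_omega :: "'a set \<Rightarrow> 'a set list \<Rightarrow> 'a set set" where
  "G_omega V xs = set (take (stop_index V xs) xs)"

definition is_matching :: "'a set \<Rightarrow> 'a set set \<Rightarrow> 'a set set \<Rightarrow> bool" where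
  "is_matching V H M \<longleftrightarrow> M \<subseteq> H \<and> (\<forall>v\<in>V. \<exists>!e. e \<in> M \<and> v \<in> e)"

definition matchings :: "'a set \<Rightarrow> 'a set set \<Rightarrow> 'a set set set" where
  "matchings V H = {M. is_matching V H M}"

end

(*
  Fix a perfect matching M and let e be its last edge in the random order. Since M covers V,
  the process stops at e at the latest, so M is contained in G_omega iff e is still needed
  when it is drawn, i.e. some vertex of e is not covered by the edges drawn before e.
  Inclusion-exclusion over the set S of such vertices of e reduces this to the event that
  all edges of M - {e}, but no other edge meeting S, come before e. Only the relative order
  of M and the t edges meeting S matters here (they share just e), so the event has
  probability (m-1)! (t-1)! / (m+t-1)! = 1 / (m * C(m+t-1, m)) with m = |M| = n and
  t = n^r - (n-1)^|S| n^(r-|S|). Summing over e in M and over the (n!)^(r-1) perfect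
  matchings, one for each choice of bijections from the first part to the others, gives
  the formula.
*)

theory Submission
  imports Defs
begin

definition preceding :: "'a list \<Rightarrow> 'a \<Rightarrow> 'a set" where
  "preceding xs e = set (takeWhile (\<lambda>x. x \<noteq> e) xs)"

lemma preceding_Nil [simp]: "preceding [] e = {}"
  by (simp add: preceding_def)

lemma preceding_Cons [simp]:
  "preceding (x # xs) e = (if x = e then {} else insert x (preceding xs e))"
  by (cases "x = e") (simp_all add: preceding_def)

lemma preceding_subset_set: "preceding xs e \<subseteq> set xs"
  by (induction xs) auto

lemma not_in_preceding [simp]: "e \<notin> preceding xs e"
  by (induction xs) auto

lemma preceding_append_Cons: "e \<notin> set p \<Longrightarrow> preceding (p @ e # q) e = set p"
  by (induction p) auto

lemma preceding_filter: "e \<in> D \<Longrightarrow> preceding (filter (\<lambda>x. x \<in> D) xs) e = preceding xs e \<inter> D"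
  by (induction xs) auto

lemma preceding_asym: "f \<in> preceding xs e \<Longrightarrow> e \<notin> preceding xs f"
  by (induction xs) (auto split: if_splits)

lemma ex_preceded_by_all_others:
  assumes "distinct xs" "M \<subseteq> set xs" "M \<noteq> {}"
  shows "\<exists>e\<in>M. M - {e} \<subseteq> preceding xs e"
proof -
  obtain p e q where xs: "xs = p @ e # q" and "e \<in> M" and "\<forall>z\<in>set q. z \<notin> M"
    using split_list_last_prop[of xs "\<lambda>x. x \<in> M"] assms(2,3) by blast
  moreover have "preceding xs e = set p"
    using assms(1) xs by (simp add: preceding_append_Cons)
  ultimately show ?thesis
    using assms(2) by auto
qed

section \<open>The stopping rule\<close>

lemma stop_index_le: "V \<subseteq> \<Union> (set (take k xs)) \<Longrightarrow> stop_index V xs \<le> k"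
  unfolding stop_index_def by (rule Least_le)

lemma covered_take_stop_index:
  "V \<subseteq> \<Union> (set (take k xs)) \<Longrightarrow> V \<subseteq> \<Union> (set (take (stop_index V xs) xs))"
  unfolding stop_index_def by (rule LeastI)

lemma G_omega_subset_prefix:
  assumes "V \<subseteq> \<Union> (set p)"
  shows "G_omega V (p @ q) \<subseteq> set p"
proof -
  have "stop_index V (p @ q) \<le> length p"
    using assms by (intro stop_index_le) simp
  then show ?thesis
    unfolding G_omega_def using set_take_subset_set_take[of _ "length p" "p @ q"] by simp
qed

lemma G_omega_append_Cons:
  assumes "V \<subseteq> e \<union> \<Union> (set p)" "\<not> V \<subseteq> \<Union> (set p)"
  shows "G_omega V (p @ e # q) = insert e (set p)"
proof -
  let ?xs = "p @ e # q"
  have take_Suc: "take (Suc (length p)) ?xs = p @ [e]"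
    by simp
  have "stop_index V ?xs = Suc (length p)"
  proof (rule antisym)
    show "stop_index V ?xs \<le> Suc (length p)"
      using assms(1) by (intro stop_index_le) (simp add: take_Suc Un_commute)
    show "Suc (length p) \<le> stop_index V ?xs"
    proof (rule ccontr)
      assume "\<not> Suc (length p) \<le> stop_index V ?xs"
      then have "set (take (stop_index V ?xs) ?xs) \<subseteq> set p"
        using set_take_subset_set_take[of _ "length p" ?xs] by simp
      moreover have "V \<subseteq> \<Union> (set (take (stop_index V ?xs) ?xs))"
        by (rule covered_take_stop_index[of _ "Suc (length p)"]) (use assms(1) take_Suc in auto)
      ultimately show False
        using assms(2) by blast
    qed
  qed
  then show ?thesis
    unfolding G_omega_def by (simp add: take_Suc)
qed

lemma matching_subset_G_omega_iff:
  assumes "V \<subseteq> \<Union> M" "e \<in> M" "e \<subseteq> V" "e \<in> set xs" "M - {e} \<subseteq> preceding xs e"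
  shows "M \<subseteq> G_omega V xs \<longleftrightarrow> \<not> e \<subseteq> \<Union> (preceding xs e)"
proof -
  obtain p q where xs: "xs = p @ e # q" and "e \<notin> set p"
    using split_list_first[OF assms(4)] by blast
  then have prec: "preceding xs e = set p"
    by (simp add: preceding_append_Cons)
  have V_cover: "V \<subseteq> e \<union> \<Union> (set p)"
    using assms(1,5) prec by blast
  show ?thesis
  proof (cases "V \<subseteq> \<Union> (set p)")
    case True
    then have "e \<notin> G_omega V xs"
      using G_omega_subset_prefix[of V p "e # q"] xs \<open>e \<notin> set p\<close> by auto
    then show ?thesis
      using True assms(2,3) prec by auto
  next
    case False
    then show ?thesis
      using G_omega_append_Cons[OF V_cover False] xs prec assms(5) V_cover by auto
  qed
qed

section \<open>Counting permutations\<close>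

definition insert_at :: "nat \<Rightarrow> 'a \<Rightarrow> 'a list \<Rightarrow> 'a list" where
  "insert_at k a ys = take k ys @ a # drop k ys"

lemma insert_at_permutations_of_set:
  assumes "ys \<in> permutations_of_set A" "a \<notin> A"
  shows "insert_at k a ys \<in> permutations_of_set (insert a A)" "removeAll a (insert_at k a ys) = ys"
proof -
  have ys: "set ys = A" "distinct ys"
    using assms(1) by (auto simp: permutations_of_set_def)
  then have a_notin: "a \<notin> set (take k ys)" "a \<notin> set (drop k ys)"
    using assms(2) by (auto dest: in_set_takeD in_set_dropD)
  moreover have "set (take k ys) \<union> set (drop k ys) = A"
    using ys(1) by (metis append_take_drop_id set_append)
  moreover have "distinct (take k ys @ drop k ys)"
    using ys(2) by simp
  ultimately show "insert_at k a ys \<in> permutations_of_set (insert a A)"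
    unfolding insert_at_def by (auto simp: permutations_of_set_def simp del: append_take_drop_id)
  show "removeAll a (insert_at k a ys) = ys"
    using a_notin unfolding insert_at_def by simp
qed

lemma insert_at_inj:
  assumes "a \<notin> set ys" "a \<notin> set ys'" "k \<le> length ys" "k' \<le> length ys'"
    and "insert_at k a ys = insert_at k' a ys'"
  shows "ys = ys' \<and> k = k'"
proof -
  have "a \<notin> set (take k ys)" "a \<notin> set (drop k ys)"
    using assms(1) by (auto dest: in_set_takeD in_set_dropD)
  then have "take k ys = take k' ys'" "drop k ys = drop k' ys'"
    using assms(5) append_Cons_eq_iff[of a "take k ys" "drop k ys" "take k' ys'" "drop k' ys'"]
    unfolding insert_at_def by simp_all
  then show ?thesis
    using assms(3,4) by (metis append_take_drop_id length_take min.absorb2)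
qed

lemma permutations_of_set_insert_eq_insert_at:
  assumes "xs \<in> permutations_of_set (insert a A)" "a \<notin> A"
  obtains ys k where "ys \<in> permutations_of_set A" "k \<le> card A" "xs = insert_at k a ys"
proof -
  have xs: "set xs = insert a A" "distinct xs"
    using assms(1) by (auto simp: permutations_of_set_def)
  then obtain p q where pq: "xs = p @ a # q"
    using split_list[of a xs] by auto
  with xs have "a \<notin> set p" "a \<notin> set q"
    by auto
  then have pq_perm: "p @ q \<in> permutations_of_set A"
    using xs pq assms(2) by (auto simp: permutations_of_set_def)
  moreover have "length p \<le> card A"
    using length_finite_permutations_of_set[OF pq_perm] by simp
  moreover have "xs = insert_at (length p) a (p @ q)"
    using pq unfolding insert_at_def by simp
  ultimately show ?thesis
    using that by blast
qed

lemma card_permutations_of_set_insert_removeAll: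
  assumes "a \<notin> A"
  shows "card {xs \<in> permutations_of_set (insert a A). R (removeAll a xs)}
       = Suc (card A) * card {ys \<in> permutations_of_set A. R ys}"
proof -
  let ?ins = "\<lambda>(ys, k). insert_at k a ys"
  let ?D = "{ys \<in> permutations_of_set A. R ys} \<times> {0..card A}"
  have "{xs \<in> permutations_of_set (insert a A). R (removeAll a xs)} = ?ins ` ?D"
  proof (intro equalityI subsetI)
    fix xs assume xs: "xs \<in> {xs \<in> permutations_of_set (insert a A). R (removeAll a xs)}"
    then have "xs \<in> permutations_of_set (insert a A)"
      by simp
    then obtain ys k where ys: "ys \<in> permutations_of_set A" "k \<le> card A" "xs = insert_at k a ys"
      by (rule permutations_of_set_insert_eq_insert_at[OF _ assms])
    then have "R ys"
      using xs insert_at_permutations_of_set(2)[OF ys(1) assms] by simp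
    then show "xs \<in> ?ins ` ?D"
      using ys by (intro image_eqI[of _ _ "(ys, k)"]) auto
  qed (auto simp: insert_at_permutations_of_set[OF _ assms])
  moreover have "inj_on ?ins ?D"
  proof (rule inj_onI)
    fix x x' assume "x \<in> ?D" "x' \<in> ?D" "?ins x = ?ins x'"
    moreover obtain ys k ys' k' where "x = (ys, k)" "x' = (ys', k')"
      by fastforce
    ultimately show "x = x'"
      using insert_at_inj[of a ys ys' k k'] assms
      by (auto simp: length_finite_permutations_of_set permutations_of_set_def)
  qed
  ultimately show ?thesis
    by (simp add: card_image card_cartesian_product)
qed

lemma card_permutations_of_set_filter:
  assumes "finite E" "D \<subseteq> E"
  shows "card {xs \<in> permutations_of_set E. filter (\<lambda>x. x \<in> D) xs \<in> P} * fact (card D)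
       = fact (card E) * card (P \<inter> permutations_of_set D)"
proof -
  have finD: "finite D"
    using assms finite_subset by blast
  have general: "card {xs \<in> permutations_of_set (D \<union> F). filter (\<lambda>x. x \<in> D) xs \<in> P} * fact (card D)
      = fact (card D + card F) * card (P \<inter> permutations_of_set D)"
    if "finite F" "F \<inter> D = {}" for F
    using that
  proof (induction F rule: finite_induct)
    case empty
    have "{xs \<in> permutations_of_set D. filter (\<lambda>x. x \<in> D) xs \<in> P} = P \<inter> permutations_of_set D"
      by (auto simp: permutations_of_set_def)
    then show ?case
      by simp
  next
    case (insert a F)
    have a: "a \<notin> D \<union> F"
      using insert by auto
    have filter_removeAll: "filter (\<lambda>x. x \<in> D) (removeAll a xs) = filter (\<lambda>x. x \<in> D) xs" for xs
      using a by (induction xs) auto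
    have card_DF: "card (D \<union> F) = card D + card F"
      using insert finD by (simp add: card_Un_disjoint inf_commute)
    have "card {xs \<in> permutations_of_set (D \<union> insert a F). filter (\<lambda>x. x \<in> D) xs \<in> P}
        = Suc (card D + card F) * card {ys \<in> permutations_of_set (D \<union> F). filter (\<lambda>x. x \<in> D) ys \<in> P}"
      using card_permutations_of_set_insert_removeAll[of a "D \<union> F" "\<lambda>ys. filter (\<lambda>x. x \<in> D) ys \<in> P"]
        a by (simp add: filter_removeAll card_DF)
    then show ?case
      using insert by (simp add: algebra_simps)
  qed
  have "(E - D) \<inter> D = {}" "D \<union> (E - D) = E" "card D + card (E - D) = card E"
    using assms finD by (auto simp: card_Diff_subset card_mono)
  then show ?thesis
    using general[of "E - D"] assms(1) by simp
qed

lemma permutations_of_set_preceding_eq_image: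
  assumes "e \<in> D" "B \<subseteq> D - {e}"
  shows "{zs \<in> permutations_of_set D. preceding zs e = B}
       = (\<lambda>(b, c). b @ e # c) ` (permutations_of_set B \<times> permutations_of_set (D - insert e B))"
proof (intro equalityI subsetI)
  fix zs assume "zs \<in> {zs \<in> permutations_of_set D. preceding zs e = B}"
  then have zs: "set zs = D" "distinct zs" "preceding zs e = B"
    by (auto simp: permutations_of_set_def)
  then obtain b c where bc: "zs = b @ e # c" "e \<notin> set b"
    using split_list_first[of e zs] assms(1) by auto
  then have "set b = B"
    using zs(3) by (simp add: preceding_append_Cons)
  then have "b \<in> permutations_of_set B" "c \<in> permutations_of_set (D - insert e B)"
    using zs bc by (auto simp: permutations_of_set_def)
  then show "zs \<in> (\<lambda>(b, c). b @ e # c) ` (permutations_of_set B \<times> permutations_of_set (D - insert e B))"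
    using bc by (intro image_eqI[of _ _ "(b, c)"]) auto
next
  fix zs assume "zs \<in> (\<lambda>(b, c). b @ e # c) ` (permutations_of_set B \<times> permutations_of_set (D - insert e B))"
  then obtain b c where "b \<in> permutations_of_set B" "c \<in> permutations_of_set (D - insert e B)" "zs = b @ e # c"
    by auto
  then show "zs \<in> {zs \<in> permutations_of_set D. preceding zs e = B}"
    using assms by (auto simp: permutations_of_set_def preceding_append_Cons)
qed

lemma card_permutations_of_set_preceding:
  assumes "finite D" "e \<in> D" "B \<subseteq> D - {e}"
  shows "card {zs \<in> permutations_of_set D. preceding zs e = B} = fact (card B) * fact (card D - card B - 1)"
proof -
  let ?C = "D - insert e B"
  have "inj_on (\<lambda>(b, c). b @ e # c) (permutations_of_set B \<times> permutations_of_set ?C)"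
  proof (rule inj_onI, clarify)
    fix b c b' c'
    assume "b \<in> permutations_of_set B" "c \<in> permutations_of_set ?C" "b @ e # c = b' @ e # c'"
    moreover have "e \<notin> set b" "e \<notin> set c"
      using calculation(1,2) assms(3) by (auto simp: permutations_of_set_def)
    ultimately show "b = b' \<and> c = c'"
      using append_Cons_eq_iff[of e b c b' c'] by simp
  qed
  moreover have "finite B"
    using assms finite_subset by blast
  moreover have "card ?C = card D - card B - 1"
  proof -
    have "e \<notin> B"
      using assms(3) by blast
    then show ?thesis
      using assms \<open>finite B\<close> by (subst card_Diff_subset) auto
  qed
  ultimately show ?thesis
    unfolding permutations_of_set_preceding_eq_image[OF assms(2,3)]
    using assms(1) by (simp add: card_image card_cartesian_product)
qed

section \<open>Orders under which a perfect matching survives\<close>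

lemma is_matching_covers:
  assumes "is_matching V H M"
  shows "V \<subseteq> \<Union> M"
proof
  fix v assume "v \<in> V"
  then have "\<exists>!e. e \<in> M \<and> v \<in> e"
    using assms unfolding is_matching_def by simp
  then show "v \<in> \<Union> M"
    by (elim ex1E) blast
qed

lemma is_matching_edge_unique:
  assumes "is_matching V H M" "x \<in> V" "e \<in> M" "f \<in> M" "x \<in> e" "x \<in> f"
  shows "e = f"
proof -
  have "\<exists>!e. e \<in> M \<and> x \<in> e"
    using assms(1,2) unfolding is_matching_def by simp
  then show ?thesis
    using assms(3-6) by (elim ex1E) blast
qed

definition hitting :: "'a set set \<Rightarrow> 'a set \<Rightarrow> 'a set set" where
  "hitting E S = {f \<in> E. f \<inter> S \<noteq> {}}"

definition completing_orders :: "'a set set \<Rightarrow> 'a set set \<Rightarrow> 'a set \<Rightarrow> 'a set list set" where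
  "completing_orders E M e =
     {xs \<in> permutations_of_set E. M - {e} \<subseteq> preceding xs e \<and> \<not> e \<subseteq> \<Union> (preceding xs e)}"

definition avoiding_orders :: "'a set set \<Rightarrow> 'a set set \<Rightarrow> 'a set \<Rightarrow> 'a set \<Rightarrow> 'a set list set" where
  "avoiding_orders E M e S =
     {xs \<in> permutations_of_set E. M - {e} \<subseteq> preceding xs e \<and> S \<inter> \<Union> (preceding xs e) = {}}"

lemma completing_orders_disjoint:
  assumes "e \<in> M" "e' \<in> M" "e \<noteq> e'"
  shows "completing_orders E M e \<inter> completing_orders E M e' = {}"
proof -
  have False if "M - {e} \<subseteq> preceding xs e" "M - {e'} \<subseteq> preceding xs e'" for xs
  proof -
    have "e' \<in> preceding xs e" "e \<in> preceding xs e'"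
      using that assms by blast+
    then show False
      using preceding_asym[of e' xs e] by simp
  qed
  then show ?thesis
    unfolding completing_orders_def by blast
qed

lemma orders_containing_matching_eq_UN:
  assumes "E \<subseteq> Pow V" "is_matching V E M" "M \<noteq> {}"
  shows "{xs \<in> permutations_of_set E. M \<subseteq> G_omega V xs} = (\<Union>e\<in>M. completing_orders E M e)"
proof -
  have ME: "M \<subseteq> E"
    using assms(2) unfolding is_matching_def by simp
  have contains_iff: "M \<subseteq> G_omega V xs \<longleftrightarrow> \<not> e \<subseteq> \<Union> (preceding xs e)"
    if "xs \<in> permutations_of_set E" "e \<in> M" "M - {e} \<subseteq> preceding xs e" for xs e
    using that ME assms(1) is_matching_covers[OF assms(2)]
    by (intro matching_subset_G_omega_iff) (auto simp: permutations_of_set_def)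
  show ?thesis
  proof (intro equalityI subsetI)
    fix xs assume xs: "xs \<in> {xs \<in> permutations_of_set E. M \<subseteq> G_omega V xs}"
    then have perm: "xs \<in> permutations_of_set E" and sub: "M \<subseteq> G_omega V xs"
      by simp_all
    have "\<exists>e\<in>M. M - {e} \<subseteq> preceding xs e"
      using perm ME assms(3) by (intro ex_preceded_by_all_others) (auto simp: permutations_of_set_def)
    then obtain e where e: "e \<in> M" "M - {e} \<subseteq> preceding xs e"
      by blast
    then have "xs \<in> completing_orders E M e"
      using perm sub contains_iff[OF perm e] unfolding completing_orders_def by simp
    then show "xs \<in> (\<Union>e\<in>M. completing_orders E M e)"
      using e(1) by blast
  next
    fix xs assume "xs \<in> (\<Union>e\<in>M. completing_orders E M e)"
    then obtain e where "e \<in> M" "xs \<in> permutations_of_set E" "M - {e} \<subseteq> preceding xs e"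
        "\<not> e \<subseteq> \<Union> (preceding xs e)"
      unfolding completing_orders_def by blast
    then show "xs \<in> {xs \<in> permutations_of_set E. M \<subseteq> G_omega V xs}"
      using contains_iff by simp
  qed
qed

lemma card_orders_containing_matching:
  assumes "finite E" "E \<subseteq> Pow V" "is_matching V E M" "M \<noteq> {}"
  shows "card {xs \<in> permutations_of_set E. M \<subseteq> G_omega V xs} = (\<Sum>e\<in>M. card (completing_orders E M e))"
proof -
  have "finite M"
    using assms(1,3) finite_subset unfolding is_matching_def by blast
  moreover have "finite (completing_orders E M e)" for e
    unfolding completing_orders_def by simp
  ultimately show ?thesis
    unfolding orders_containing_matching_eq_UN[OF assms(2-4)]
    by (intro card_UN_disjoint) (auto simp: completing_orders_disjoint)
qed

lemma sum_card_matchings_G_omega: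
  assumes "finite E"
  shows "(\<Sum>xs\<in>permutations_of_set E. card (matchings V (G_omega V xs)))
       = (\<Sum>M\<in>matchings V E. card {xs \<in> permutations_of_set E. M \<subseteq> G_omega V xs})"
proof -
  have "matchings V E \<subseteq> Pow E"
    unfolding matchings_def is_matching_def by blast
  then have fin: "finite (matchings V E)"
    using assms by (meson finite_Pow_iff finite_subset)
  have "matchings V (G_omega V xs) = {M \<in> matchings V E. M \<subseteq> G_omega V xs}"
    if "xs \<in> permutations_of_set E" for xs
  proof -
    have "G_omega V xs \<subseteq> E"
      using that unfolding G_omega_def permutations_of_set_def by (auto dest: in_set_takeD)
    then show ?thesis
      unfolding matchings_def is_matching_def by blast
  qed
  then have "(\<Sum>xs\<in>permutations_of_set E. card (matchings V (G_omega V xs)))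
      = (\<Sum>xs\<in>permutations_of_set E. \<Sum>M\<in>{M \<in> matchings V E. M \<subseteq> G_omega V xs}. 1)"
    by simp
  also have "\<dots> = (\<Sum>M\<in>matchings V E. \<Sum>xs\<in>{xs \<in> permutations_of_set E. M \<subseteq> G_omega V xs}. 1)"
    using sum.swap_restrict[OF finite_permutations_of_set fin] .
  finally show ?thesis
    by simp
qed

lemma completing_orders_eq_UN_avoiding:
  "completing_orders E M e = (\<Union>v\<in>e. avoiding_orders E M e {v})"
  unfolding completing_orders_def avoiding_orders_def by blast

lemma INT_avoiding_orders:
  "S \<noteq> {} \<Longrightarrow> (\<Inter>v\<in>S. avoiding_orders E M e {v}) = avoiding_orders E M e S"
  unfolding avoiding_orders_def by blast

lemma matching_Int_hitting_subset:
  assumes "E \<subseteq> Pow V" "is_matching V E M" "e \<in> M" "S \<subseteq> e"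
  shows "M \<inter> hitting E S \<subseteq> {e}"
proof
  fix f assume f: "f \<in> M \<inter> hitting E S"
  then obtain v where "v \<in> f" "v \<in> S"
    unfolding hitting_def by blast
  moreover have "e \<subseteq> V"
    using assms(1-3) unfolding is_matching_def by blast
  ultimately have "v \<in> V" "v \<in> e"
    using assms(4) by blast+
  then show "f \<in> {e}"
    using is_matching_edge_unique[OF assms(2) \<open>v \<in> V\<close> _ assms(3) \<open>v \<in> f\<close>] f by simp
qed

lemma avoiding_iff_Int_hitting:
  assumes "P \<subseteq> E" "e \<notin> P" "M \<inter> hitting E S \<subseteq> {e}"
  shows "M - {e} \<subseteq> P \<and> S \<inter> \<Union> P = {} \<longleftrightarrow> P \<inter> (M \<union> hitting E S) = M - {e}"
proof
  assume L: "M - {e} \<subseteq> P \<and> S \<inter> \<Union> P = {}"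
  then have "P \<inter> hitting E S = {}"
    unfolding hitting_def by blast
  then show "P \<inter> (M \<union> hitting E S) = M - {e}"
    using L assms(2) by blast
next
  assume R: "P \<inter> (M \<union> hitting E S) = M - {e}"
  have "f \<inter> S = {}" if "f \<in> P" for f
  proof (rule ccontr)
    assume "f \<inter> S \<noteq> {}"
    then have "f \<in> hitting E S"
      using that assms(1) unfolding hitting_def by blast
    moreover from this have "f \<in> M - {e}"
      using R that by blast
    ultimately show False
      using assms(3) by blast
  qed
  then show "M - {e} \<subseteq> P \<and> S \<inter> \<Union> P = {}"
    using R by blast
qed

lemma avoiding_orders_eq_filter:
  assumes "E \<subseteq> Pow V" "is_matching V E M" "e \<in> M" "S \<subseteq> e"
  shows "avoiding_orders E M e S
       = {xs \<in> permutations_of_set E.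
            filter (\<lambda>x. x \<in> M \<union> hitting E S) xs \<in> {zs. preceding zs e = M - {e}}}"
proof -
  have pointwise: "M - {e} \<subseteq> preceding xs e \<and> S \<inter> \<Union> (preceding xs e) = {}
      \<longleftrightarrow> preceding (filter (\<lambda>x. x \<in> M \<union> hitting E S) xs) e = M - {e}"
    if "xs \<in> permutations_of_set E" for xs
  proof -
    have "preceding xs e \<subseteq> E"
      using that preceding_subset_set[of xs e] by (simp add: permutations_of_set_def)
    then show ?thesis
      using avoiding_iff_Int_hitting[OF _ not_in_preceding matching_Int_hitting_subset[OF assms]]
        preceding_filter[of e "M \<union> hitting E S" xs] assms(3) by simp
  qed
  show ?thesis
    unfolding avoiding_orders_def
  proof (rule Collect_cong)
    fix xs
    show "(xs \<in> permutations_of_set E \<and> M - {e} \<subseteq> preceding xs e \<and> S \<inter> \<Union> (preceding xs e) = {})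
      \<longleftrightarrow> (xs \<in> permutations_of_set E \<and>
           filter (\<lambda>x. x \<in> M \<union> hitting E S) xs \<in> {zs. preceding zs e = M - {e}})"
      using pointwise[of xs] by (cases "xs \<in> permutations_of_set E") simp_all
  qed
qed

lemma mult_fact_eq_imp_eq_div_choose:
  fixes x N :: nat
  assumes "m \<ge> 1" "t \<ge> 1" "x * fact (m + t - 1) = N * (fact (m - 1) * fact (t - 1))"
  shows "real x = real N / (real m * real ((m + t - 1) choose m))"
proof -
  let ?C = "real ((m + t - 1) choose m)" and ?ab = "fact (m - 1) * fact (t - 1) :: real"
  have "?C = fact (m + t - 1) / (fact m * fact (t - 1))"
    using binomial_fact[of m "m + t - 1", where 'a = real] assms by simp
  moreover have "(fact m :: real) = real m * fact (m - 1)"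
    using assms(1) by (simp add: fact_reduce)
  ultimately have choose: "fact (m + t - 1) = real m * ?C * ?ab"
    using assms(1) by simp
  have "real x * fact (m + t - 1) = real N * ?ab"
    using arg_cong[OF assms(3), of real] by simp
  then have "real x * (real m * ?C) * ?ab = real N * ?ab"
    unfolding choose by (simp add: mult_ac)
  then have "real x * (real m * ?C) = real N"
    by simp
  moreover have "?C > 0" "real m > 0"
    using assms by simp_all
  ultimately show ?thesis
    by (simp add: field_simps)
qed

lemma card_avoiding_orders:
  assumes "finite E" "E \<subseteq> Pow V" "is_matching V E M" "e \<in> M" "S \<subseteq> e" "S \<noteq> {}"
  shows "real (card (avoiding_orders E M e S))
       = fact (card E) / (real (card M) * real ((card M + card (hitting E S) - 1) choose card M))"
proof -
  let ?T = "hitting E S"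
  let ?D = "M \<union> ?T"
  define m where "m = card M"
  define t where "t = card ?T"
  have ME: "M \<subseteq> E"
    using assms(3) unfolding is_matching_def by simp
  have "?T \<subseteq> E" "finite M" "finite ?T"
    using ME assms(1) finite_subset unfolding hitting_def by auto
  have "e \<in> ?T"
    using assms(4-6) ME unfolding hitting_def by blast
  then have "M \<inter> ?T = {e}"
    using matching_Int_hitting_subset[OF assms(2-5)] assms(4) by blast
  then have card_D: "card ?D = m + t - 1"
    using card_Un_Int[OF \<open>finite M\<close> \<open>finite ?T\<close>] unfolding m_def t_def by simp
  have "m \<ge> 1" "t \<ge> 1"
    using \<open>finite M\<close> \<open>finite ?T\<close> assms(4) \<open>e \<in> ?T\<close> unfolding m_def t_def
    by (auto simp: Suc_le_eq card_gt_0_iff)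
  \<comment> \<open>Only the relative order of M \<union> hitting E S matters: first M - {e}, then e, then the rest.\<close>
  let ?P = "{zs. preceding zs e = M - {e}}"
  have "card (M - {e}) = m - 1"
    using \<open>finite M\<close> assms(4) unfolding m_def by simp
  moreover have "card ?D - (m - 1) - 1 = t - 1"
    using card_D \<open>m \<ge> 1\<close> \<open>t \<ge> 1\<close> by simp
  moreover have "?P \<inter> permutations_of_set ?D = {zs \<in> permutations_of_set ?D. preceding zs e = M - {e}}"
    by blast
  moreover have "M - {e} \<subseteq> ?D - {e}"
    by blast
  ultimately have card_P: "card (?P \<inter> permutations_of_set ?D) = fact (m - 1) * fact (t - 1)"
    using card_permutations_of_set_preceding[of ?D e "M - {e}"] \<open>finite M\<close> \<open>finite ?T\<close> assms(4)
    by simp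
  have "card {xs \<in> permutations_of_set E. filter (\<lambda>x. x \<in> ?D) xs \<in> ?P} * fact (card ?D)
      = fact (card E) * card (?P \<inter> permutations_of_set ?D)"
    using ME \<open>?T \<subseteq> E\<close> by (intro card_permutations_of_set_filter assms(1)) simp
  then have "card (avoiding_orders E M e S) * fact (m + t - 1) = fact (card E) * (fact (m - 1) * fact (t - 1))"
    unfolding avoiding_orders_eq_filter[OF assms(2-5)] card_D card_P .
  then show ?thesis
    using mult_fact_eq_imp_eq_div_choose[OF \<open>m \<ge> 1\<close> \<open>t \<ge> 1\<close>] unfolding m_def t_def by simp
qed

lemma sum_nonempty_subsets_by_card:
  fixes g :: "nat \<Rightarrow> 'b::comm_semiring_1"
  assumes "finite A"
  shows "(\<Sum>S | S \<subseteq> A \<and> S \<noteq> {}. g (card S)) = (\<Sum>i=1..card A. of_nat (card A choose i) * g i)"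
proof -
  let ?N = "{S. S \<subseteq> A \<and> S \<noteq> {}}"
  have "card ` ?N \<subseteq> {1..card A}"
    using assms by (auto simp: Suc_le_eq card_gt_0_iff card_mono dest: finite_subset)
  then have "(\<Sum>S\<in>?N. g (card S)) = (\<Sum>i=1..card A. \<Sum>S\<in>{S \<in> ?N. card S = i}. g (card S))"
    using assms by (intro sum.group[symmetric]) auto
  also have "\<dots> = (\<Sum>i=1..card A. of_nat (card A choose i) * g i)"
  proof (rule sum.cong[OF refl])
    fix i assume "i \<in> {1..card A}"
    then have "{S \<in> ?N. card S = i} = {S. S \<subseteq> A \<and> card S = i}"
      by auto
    then show "(\<Sum>S\<in>{S \<in> ?N. card S = i}. g (card S)) = of_nat (card A choose i) * g i"
      using n_subsets[OF assms] by simp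
  qed
  finally show ?thesis .
qed

lemma card_completing_orders:
  assumes "finite E" "E \<subseteq> Pow V" "is_matching V E M" "e \<in> M" "finite e"
  shows "real (card (completing_orders E M e))
       = (\<Sum>S | S \<subseteq> e \<and> S \<noteq> {}. (-1) ^ (card S + 1) *
            (fact (card E) / (real (card M) * real ((card M + card (hitting E S) - 1) choose card M))))"
proof -
  let ?U = "permutations_of_set E"
  define f where "f X = real (card (X \<inter> ?U))" for X
  have f_card: "f X = real (card X)" if "X \<subseteq> ?U" for X
    unfolding f_def using that by (simp add: Int_absorb2)
  have f_add: "f (A \<union> B) = f A + f B" if "disjnt A B" for A B
  proof -
    have "(A \<union> B) \<inter> ?U = A \<inter> ?U \<union> B \<inter> ?U"
      by blast
    moreover have "card (A \<inter> ?U \<union> B \<inter> ?U) = card (A \<inter> ?U) + card (B \<inter> ?U)"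
      using that by (intro card_Un_disjoint) (auto simp: disjnt_def)
    ultimately show ?thesis
      unfolding f_def by simp
  qed
  have "real (card (completing_orders E M e)) = f (\<Union>v\<in>e. avoiding_orders E M e {v})"
    using f_card[of "completing_orders E M e"]
    by (simp add: completing_orders_def completing_orders_eq_UN_avoiding[symmetric])
  also have "\<dots> = (\<Sum>S | S \<subseteq> e \<and> S \<noteq> {}. (-1) ^ (card S + 1) * f (\<Inter>v\<in>S. avoiding_orders E M e {v}))"
    using f_add assms(5) by (rule Incl_Excl_UN)
  also have "\<dots> = (\<Sum>S | S \<subseteq> e \<and> S \<noteq> {}. (-1) ^ (card S + 1) *
            (fact (card E) / (real (card M) * real ((card M + card (hitting E S) - 1) choose card M))))"
  proof (rule sum.cong)
    fix S assume "S \<in> {S. S \<subseteq> e \<and> S \<noteq> {}}"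
    then have S: "S \<subseteq> e" "S \<noteq> {}"
      by simp_all
    have "f (\<Inter>v\<in>S. avoiding_orders E M e {v}) = f (avoiding_orders E M e S)"
      by (simp add: INT_avoiding_orders[OF S(2)])
    also have "\<dots> = real (card (avoiding_orders E M e S))"
      by (rule f_card) (auto simp: avoiding_orders_def)
    also have "\<dots> = fact (card E) / (real (card M) * real ((card M + card (hitting E S) - 1) choose card M))"
      by (rule card_avoiding_orders[OF assms(1-4) S])
    finally show "(-1) ^ (card S + 1) * f (\<Inter>v\<in>S. avoiding_orders E M e {v}) = (-1) ^ (card S + 1) *
            (fact (card E) / (real (card M) * real ((card M + card (hitting E S) - 1) choose card M)))"
      by simp
  qed simp
  finally show ?thesis .
qed

section \<open>The complete r-partite hypergraph\<close>

definition transversal :: "nat set \<Rightarrow> (nat \<Rightarrow> nat) \<Rightarrow> (nat \<times> nat) set" where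
  "transversal J h = (\<lambda>j. (j, h j)) ` J"

lemma mem_transversal [simp]: "(j, w) \<in> transversal J h \<longleftrightarrow> j \<in> J \<and> w = h j"
  unfolding transversal_def by auto

lemma transversal_eq_iff: "transversal J h = transversal J h' \<longleftrightarrow> (\<forall>j\<in>J. h j = h' j)"
  unfolding transversal_def by (auto simp: image_iff)

lemma card_transversal: "card (transversal J h) = card J"
  unfolding transversal_def by (rule card_image) (auto intro: inj_onI)

lemma subset_transversal: "S \<subseteq> transversal J h \<Longrightarrow> S = transversal (fst ` S) h"
  unfolding transversal_def by force

lemma inj_on_transversal: "inj_on (transversal J) (PiE J F)"
  by (intro inj_onI PiE_ext) (auto simp: transversal_eq_iff)

lemma transversal_edges_eq:
  "transversal_edges r n = transversal {..<r} ` PiE {..<r} (\<lambda>_. {..<n})"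
proof (intro equalityI subsetI)
  fix e assume "e \<in> transversal_edges r n"
  then have eV: "e \<subseteq> kpart_vertices r n" and one: "\<forall>j<r. card {v. (j, v) \<in> e} = 1"
    unfolding transversal_edges_def by simp_all
  have "\<exists>w. {v. (j, v) \<in> e} = {w}" if "j < r" for j
    using one that by (simp add: card_1_singleton_iff)
  then obtain h where h: "\<forall>j<r. {v. (j, v) \<in> e} = {h j}"
    by metis
  then have "e = transversal {..<r} h"
    using eV unfolding kpart_vertices_def by (auto simp: set_eq_iff)
  moreover have "restrict h {..<r} \<in> PiE {..<r} (\<lambda>_. {..<n})"
    using h eV unfolding kpart_vertices_def by (auto simp: set_eq_iff)
  moreover have "transversal {..<r} (restrict h {..<r}) = transversal {..<r} h"
    by (simp add: transversal_eq_iff)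
  ultimately show "e \<in> transversal {..<r} ` PiE {..<r} (\<lambda>_. {..<n})"
    by (metis image_eqI)
next
  fix e assume "e \<in> transversal {..<r} ` PiE {..<r} (\<lambda>_. {..<n})"
  then obtain h where h: "h \<in> PiE {..<r} (\<lambda>_. {..<n})" "e = transversal {..<r} h"
    by blast
  have "{v. (j, v) \<in> e} = {h j}" if "j < r" for j
    using h(2) that by auto
  then show "e \<in> transversal_edges r n"
    using h unfolding transversal_edges_def kpart_vertices_def transversal_def
    by (auto simp: card_transversal[unfolded transversal_def])
qed

lemma finite_transversal_edges: "finite (transversal_edges r n)"
  unfolding transversal_edges_eq by (intro finite_imageI finite_PiE) auto

lemma transversal_edges_subset_Pow: "transversal_edges r n \<subseteq> Pow (kpart_vertices r n)"
  unfolding transversal_edges_def by blast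

lemma card_PiE_avoiding:
  assumes "finite I" "J \<subseteq> I" "\<forall>j\<in>J. h0 j < n"
  shows "card {h \<in> PiE I (\<lambda>_. {..<n}). \<forall>j\<in>J. h j \<noteq> h0 j} = (n - 1) ^ card J * n ^ (card I - card J)"
proof -
  define F where "F j = (if j \<in> J then {..<n} - {h0 j} else {..<n})" for j
  have set_eq: "{h \<in> PiE I (\<lambda>_. {..<n}). \<forall>j\<in>J. h j \<noteq> h0 j} = PiE I F"
    using assms(2) unfolding F_def by (auto simp: PiE_def Pi_def extensional_def)
  have card_F: "card (F j) = (if j \<in> J then n - 1 else n)" for j
    using assms(3) unfolding F_def by auto
  have "card (PiE I F) = (\<Prod>j\<in>I. if j \<in> J then n - 1 else n)"
    using assms(1) card_F by (simp add: card_PiE)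
  also have "\<dots> = (n - 1) ^ card (I \<inter> J) * n ^ card (I - J)"
    using assms(1) by (simp add: prod.If_cases Diff_eq)
  also have "\<dots> = (n - 1) ^ card J * n ^ (card I - card J)"
    using assms(1,2) by (simp add: Int_absorb1 card_Diff_subset finite_subset)
  finally show ?thesis
    unfolding set_eq .
qed

lemma card_hitting_transversal_edges:
  assumes "e \<in> transversal_edges r n" "S \<subseteq> e"
  shows "card (hitting (transversal_edges r n) S) = n ^ r - (n - 1) ^ card S * n ^ (r - card S)"
proof -
  let ?P = "PiE {..<r} (\<lambda>_. {..<n})"
  obtain h0 where h0: "h0 \<in> ?P" "e = transversal {..<r} h0"
    using assms(1) unfolding transversal_edges_eq by blast
  define J where "J = fst ` S"
  have S_eq: "S = transversal J h0"
    using subset_transversal assms(2) h0(2) unfolding J_def by blast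
  have J_sub: "J \<subseteq> {..<r}"
    using assms(2) h0(2) unfolding J_def transversal_def by auto
  have disjoint_iff: "transversal {..<r} h \<inter> S = {} \<longleftrightarrow> (\<forall>j\<in>J. h j \<noteq> h0 j)" for h
    using J_sub unfolding S_eq transversal_def by auto
  have "hitting (transversal_edges r n) S = transversal {..<r} ` {h \<in> ?P. transversal {..<r} h \<inter> S \<noteq> {}}"
    unfolding hitting_def transversal_edges_eq by blast
  also have "{h \<in> ?P. transversal {..<r} h \<inter> S \<noteq> {}} = ?P - {h \<in> ?P. \<forall>j\<in>J. h j \<noteq> h0 j}"
    using disjoint_iff by blast
  finally have "card (hitting (transversal_edges r n) S) = card (?P - {h \<in> ?P. \<forall>j\<in>J. h j \<noteq> h0 j})"
    by (simp add: card_image inj_on_subset[OF inj_on_transversal, of _ "{..<r}" "\<lambda>_. {..<n}"])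
  also have "\<dots> = card ?P - card {h \<in> ?P. \<forall>j\<in>J. h j \<noteq> h0 j}"
    by (rule card_Diff_subset) (auto intro: finite_subset[OF _ finite_PiE[of "{..<r}" "\<lambda>_. {..<n}"]])
  also have "\<dots> = n ^ r - (n - 1) ^ card J * n ^ (r - card J)"
  proof -
    have "\<forall>j\<in>J. h0 j < n"
      using J_sub h0(1) by (auto simp: PiE_iff)
    then show ?thesis
      using card_PiE_avoiding[OF finite_lessThan J_sub] by (simp add: card_PiE)
  qed
  finally show ?thesis
    unfolding S_eq card_transversal .
qed

lemma transversal_in_transversal_edges:
  "\<forall>j<r. h j < n \<Longrightarrow> transversal {..<r} h \<in> transversal_edges r n"
  unfolding transversal_edges_eq
  by (rule image_eqI[of _ _ "restrict h {..<r}"]) (auto simp: transversal_eq_iff)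

lemma transversal_edgesE:
  assumes "e \<in> transversal_edges r n"
  obtains h where "\<forall>j<r. h j < n" "e = transversal {..<r} h"
  using assms unfolding transversal_edges_eq by (auto simp: PiE_iff)

lemma matching_transversals_eq:
  assumes "M \<in> matchings (kpart_vertices r n) (transversal_edges r n)"
    and "transversal {..<r} h \<in> M" "transversal {..<r} h' \<in> M"
    and "j < r" "h j < n" "h j = h' j"
  shows "transversal {..<r} h = transversal {..<r} h'"
proof (rule is_matching_edge_unique[of "kpart_vertices r n" "transversal_edges r n" M "(j, h j)"])
  show "is_matching (kpart_vertices r n) (transversal_edges r n) M"
    using assms(1) unfolding matchings_def by simp
qed (use assms(2-6) in \<open>auto simp: kpart_vertices_def\<close>)

definition perm_coords :: "(nat \<Rightarrow> nat \<Rightarrow> nat) \<Rightarrow> nat \<Rightarrow> nat \<Rightarrow> nat" where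
  "perm_coords g v j = (if j = 0 then v else g j v)"

text \<open>The edge through vertex v of part 0 meets part j in vertex g j v.\<close>

definition perm_matching :: "nat \<Rightarrow> nat \<Rightarrow> (nat \<Rightarrow> nat \<Rightarrow> nat) \<Rightarrow> (nat \<times> nat) set set" where
  "perm_matching r n g = (\<lambda>v. transversal {..<r} (perm_coords g v)) ` {..<n}"

definition perm_tuples :: "nat \<Rightarrow> nat \<Rightarrow> (nat \<Rightarrow> nat \<Rightarrow> nat) set" where
  "perm_tuples r n = PiE {1..<r} (\<lambda>_. {\<sigma>. \<sigma> permutes {..<n}})"

lemma perm_tuples_permutes: "g \<in> perm_tuples r n \<Longrightarrow> j \<in> {1..<r} \<Longrightarrow> g j permutes {..<n}"
  unfolding perm_tuples_def by auto

lemma card_perm_tuples: "card (perm_tuples r n) = fact n ^ (r - 1)"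
  using card_permutations[of "{..<n}" n] unfolding perm_tuples_def by (simp add: card_PiE)

lemma perm_coords_lessThan:
  assumes "g \<in> perm_tuples r n" "v < n" "j < r"
  shows "perm_coords g v j < n"
proof (cases "j = 0")
  case False
  then have "g j permutes {..<n}"
    using assms perm_tuples_permutes by simp
  then show ?thesis
    using assms(2) False permutes_in_image[of "g j" "{..<n}" v] by (simp add: perm_coords_def)
qed (use assms in \<open>simp add: perm_coords_def\<close>)

lemma perm_coords_inj:
  assumes "g \<in> perm_tuples r n" "j < r" "v < n" "v' < n" "perm_coords g v j = perm_coords g v' j"
  shows "v = v'"
proof (cases "j = 0")
  case False
  then have "g j permutes {..<n}"
    using assms perm_tuples_permutes by simp
  then show ?thesis
    using assms(5) False permutes_inj[of "g j"] by (simp add: perm_coords_def inj_eq)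
qed (use assms in \<open>simp add: perm_coords_def\<close>)

lemma perm_coords_surj:
  assumes "g \<in> perm_tuples r n" "j < r" "w < n"
  obtains v where "v < n" "perm_coords g v j = w"
proof (cases "j = 0")
  case False
  then have p: "g j permutes {..<n}"
    using assms perm_tuples_permutes by simp
  then have "inv (g j) w < n" "g j (inv (g j) w) = w"
    using assms(3) permutes_in_image[OF permutes_inv[OF p], of w] permutes_inverses(1)[OF p] by simp_all
  then show ?thesis
    using that False by (simp add: perm_coords_def)
qed (use assms that in \<open>simp add: perm_coords_def\<close>)

lemma perm_matching_in_matchings:
  assumes "g \<in> perm_tuples r n"
  shows "perm_matching r n g \<in> matchings (kpart_vertices r n) (transversal_edges r n)"
proof -
  have "perm_matching r n g \<subseteq> transversal_edges r n"
    unfolding perm_matching_def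
    using perm_coords_lessThan[OF assms] by (auto intro!: transversal_in_transversal_edges)
  moreover have "\<exists>!e. e \<in> perm_matching r n g \<and> x \<in> e" if x_V: "x \<in> kpart_vertices r n" for x
  proof -
    obtain j w where x: "x = (j, w)" "j < r" "w < n"
      using x_V unfolding kpart_vertices_def by auto
    obtain v where v: "v < n" "perm_coords g v j = w"
      using perm_coords_surj[OF assms x(2,3)] .
    show ?thesis
    proof (rule ex1I[of _ "transversal {..<r} (perm_coords g v)"])
      show "transversal {..<r} (perm_coords g v) \<in> perm_matching r n g \<and> x \<in> transversal {..<r} (perm_coords g v)"
        unfolding perm_matching_def using v x by simp
    next
      fix e assume e: "e \<in> perm_matching r n g \<and> x \<in> e"
      then obtain v' where "v' < n" "e = transversal {..<r} (perm_coords g v')"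
        unfolding perm_matching_def by auto
      moreover from this have "perm_coords g v' j = perm_coords g v j"
        using e x v by simp
      ultimately show "e = transversal {..<r} (perm_coords g v)"
        using perm_coords_inj[OF assms x(2)] v(1) by metis
    qed
  qed
  ultimately show ?thesis
    unfolding matchings_def is_matching_def by blast
qed

lemma card_perm_matching:
  assumes "r \<ge> 1"
  shows "card (perm_matching r n g) = n"
proof -
  have "inj_on (\<lambda>v. transversal {..<r} (perm_coords g v)) {..<n}"
  proof (rule inj_onI)
    fix v v' assume "transversal {..<r} (perm_coords g v) = transversal {..<r} (perm_coords g v')"
    then have "perm_coords g v 0 = perm_coords g v' 0"
      using assms by (simp add: transversal_eq_iff)
    then show "v = v'"
      by (simp add: perm_coords_def)
  qed
  then show ?thesis
    unfolding perm_matching_def by (simp add: card_image)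
qed

lemma inj_on_perm_matching:
  assumes "r \<ge> 1"
  shows "inj_on (perm_matching r n) (perm_tuples r n)"
proof (rule inj_onI)
  fix g g' assume g: "g \<in> perm_tuples r n" and g': "g' \<in> perm_tuples r n"
    and eq: "perm_matching r n g = perm_matching r n g'"
  show "g = g'"
  proof (rule PiE_ext[OF g[unfolded perm_tuples_def] g'[unfolded perm_tuples_def]])
    fix j assume j: "j \<in> {1..<r}"
    show "g j = g' j"
    proof
      fix v show "g j v = g' j v"
      proof (cases "v < n")
        case True
        then have "transversal {..<r} (perm_coords g v) \<in> perm_matching r n g'"
          using eq unfolding perm_matching_def by auto
        then obtain v' where "transversal {..<r} (perm_coords g v) = transversal {..<r} (perm_coords g' v')"
          unfolding perm_matching_def by auto
        then have "perm_coords g v 0 = perm_coords g' v' 0" "perm_coords g v j = perm_coords g' v' j"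
          using assms j by (simp_all add: transversal_eq_iff)
        then show ?thesis
          using j by (simp add: perm_coords_def)
      next
        case False
        then show ?thesis
          using perm_tuples_permutes[OF g j] perm_tuples_permutes[OF g' j] by (simp add: permutes_not_in)
      qed
    qed
  qed
qed

lemma matching_edge_through:
  assumes "r \<ge> 1" "M \<in> matchings (kpart_vertices r n) (transversal_edges r n)" "v < n"
  obtains h where "\<forall>j<r. h j < n" "h 0 = v" "transversal {..<r} h \<in> M"
proof -
  have "(0, v) \<in> kpart_vertices r n"
    using assms(1,3) unfolding kpart_vertices_def by simp
  then obtain e where "e \<in> M" "(0, v) \<in> e"
    using is_matching_covers[of _ "transversal_edges r n" M] assms(2) unfolding matchings_def by blast
  moreover from this obtain h where "\<forall>j<r. h j < n" "e = transversal {..<r} h"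
    using assms(2) transversal_edgesE unfolding matchings_def is_matching_def by blast
  ultimately show ?thesis
    using that by auto
qed

lemma matching_coords_permutes:
  assumes "r \<ge> 1" "M \<in> matchings (kpart_vertices r n) (transversal_edges r n)" "j < r"
    and H: "\<And>v. v < n \<Longrightarrow> (\<forall>j<r. H v j < n) \<and> H v 0 = v \<and> transversal {..<r} (H v) \<in> M"
  shows "(\<lambda>v. if v < n then H v j else v) permutes {..<n}"
proof (rule inj_imp_permutes)
  show "inj_on (\<lambda>v. if v < n then H v j else v) {..<n}"
  proof (rule inj_onI)
    fix v v' assume v: "v \<in> {..<n}" "v' \<in> {..<n}" and "(if v < n then H v j else v) = (if v' < n then H v' j else v')"
    then have "transversal {..<r} (H v) = transversal {..<r} (H v')"
      using matching_transversals_eq[OF assms(2), of "H v" "H v'" j] H assms(3) by simp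
    then have "H v 0 = H v' 0"
      using assms(1) by (simp add: transversal_eq_iff)
    then show "v = v'"
      using H v by simp
  qed
qed (use H assms(3) in auto)

lemma matching_eq_perm_matching:
  assumes "r \<ge> 1" and M: "M \<in> matchings (kpart_vertices r n) (transversal_edges r n)"
  obtains g where "g \<in> perm_tuples r n" "M = perm_matching r n g"
proof -
  have ME: "M \<subseteq> transversal_edges r n"
    using M unfolding matchings_def is_matching_def by simp
  have "\<exists>h. (\<forall>j<r. h j < n) \<and> h 0 = v \<and> transversal {..<r} h \<in> M" if "v < n" for v
    using matching_edge_through[OF assms that] by metis
  then obtain H where H: "\<And>v. v < n \<Longrightarrow> (\<forall>j<r. H v j < n) \<and> H v 0 = v \<and> transversal {..<r} (H v) \<in> M"
    by metis
  define g where "g = (\<lambda>j\<in>{1..<r}. \<lambda>v. if v < n then H v j else v)"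
  have "(\<lambda>v. if v < n then H v j else v) permutes {..<n}" if "j < r" for j
    using matching_coords_permutes[OF assms that] H by blast
  then have g: "g \<in> perm_tuples r n"
    unfolding perm_tuples_def g_def by auto
  have coords: "transversal {..<r} (perm_coords g v) = transversal {..<r} (H v)" if "v < n" for v
    using H that unfolding transversal_eq_iff perm_coords_def g_def by auto
  have "M = perm_matching r n g"
  proof
    show "perm_matching r n g \<subseteq> M"
      unfolding perm_matching_def using coords H by auto
    show "M \<subseteq> perm_matching r n g"
    proof
      fix e assume "e \<in> M"
      then obtain h where h: "\<forall>j<r. h j < n" "e = transversal {..<r} h"
        using ME transversal_edgesE by blast
      then have "e = transversal {..<r} (H (h 0))"
        using matching_transversals_eq[OF M, of h "H (h 0)" 0] H[of "h 0"] \<open>e \<in> M\<close> assms(1) by simp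
      then show "e \<in> perm_matching r n g"
        unfolding perm_matching_def using coords h(1) assms(1) by auto
    qed
  qed
  then show ?thesis
    using g that by blast
qed

lemma card_matchings_transversal_edges:
  assumes "r \<ge> 1"
  shows "card (matchings (kpart_vertices r n) (transversal_edges r n)) = fact n ^ (r - 1)"
proof -
  have "matchings (kpart_vertices r n) (transversal_edges r n) = perm_matching r n ` perm_tuples r n"
    using matching_eq_perm_matching[OF assms] perm_matching_in_matchings by blast
  then show ?thesis
    using card_image[OF inj_on_perm_matching[OF assms]] card_perm_tuples by simp
qed

lemma card_completing_orders_transversal_edges:
  fixes r n :: nat
  defines "V \<equiv> kpart_vertices r n" and "E \<equiv> transversal_edges r n"
  assumes "r \<ge> 1" "M \<in> matchings V E" "card M = n" "e \<in> M"
  shows "real (card (completing_orders E M e))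
       = fact (card E) / n * (\<Sum>i=1..r. (-1) ^ (i - 1) * real (r choose i)
              / real ((n ^ r - (n - 1) ^ i * n ^ (r - i) + n - 1) choose n))"
    (is "_ = _ * ?F")
proof -
  define c where "c i = real ((n ^ r - (n - 1) ^ i * n ^ (r - i) + n - 1) choose n)" for i
  have match: "is_matching V E M"
    using assms(4) unfolding matchings_def by simp
  then have eE: "e \<in> E"
    using assms(6) unfolding is_matching_def by blast
  then have card_e: "card e = r" and "finite e"
    using assms(3) unfolding E_def transversal_edges_def by (auto intro: card_ge_0_finite)
  have "real (card (completing_orders E M e))
      = (\<Sum>S | S \<subseteq> e \<and> S \<noteq> {}. (-1) ^ (card S + 1) *
          (fact (card E) / (real n * real ((n + card (hitting E S) - 1) choose n))))"
    using card_completing_orders[OF _ _ match assms(6) \<open>finite e\<close>] assms(5)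
      finite_transversal_edges transversal_edges_subset_Pow unfolding V_def E_def by simp
  also have "\<dots> = (\<Sum>S | S \<subseteq> e \<and> S \<noteq> {}. fact (card E) / n * ((-1) ^ (card S - 1) / c (card S)))"
  proof (rule sum.cong[OF refl])
    fix S assume "S \<in> {S. S \<subseteq> e \<and> S \<noteq> {}}"
    then have "S \<subseteq> e" "card S \<ge> 1"
      using \<open>finite e\<close> by (auto simp: Suc_le_eq card_gt_0_iff dest: finite_subset)
    moreover have "n + card (hitting E S) - 1 = n ^ r - (n - 1) ^ card S * n ^ (r - card S) + n - 1"
      using card_hitting_transversal_edges[of e r n S] eE \<open>S \<subseteq> e\<close> unfolding E_def by (simp add: ac_simps)
    moreover have "(-1 :: real) ^ (card S + 1) = (-1) ^ (card S - 1)"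
      using \<open>card S \<ge> 1\<close> by (cases "card S") simp_all
    ultimately show "(-1) ^ (card S + 1) * (fact (card E) / (real n * real ((n + card (hitting E S) - 1) choose n)))
        = fact (card E) / n * ((-1) ^ (card S - 1) / c (card S))"
      unfolding c_def by simp
  qed
  also have "\<dots> = (\<Sum>i=1..r. real (r choose i) * (fact (card E) / n * ((-1) ^ (i - 1) / c i)))"
    using sum_nonempty_subsets_by_card[OF \<open>finite e\<close>, of "\<lambda>i. fact (card E) / n * ((-1) ^ (i - 1) / c i)"]
    unfolding card_e by simp
  also have "\<dots> = fact (card E) / n * ?F"
    unfolding c_def by (simp add: sum_distrib_left algebra_simps)
  finally show ?thesis .
qed

lemma card_orders_containing_transversal_matching:
  fixes r n :: nat
  defines "V \<equiv> kpart_vertices r n" and "E \<equiv> transversal_edges r n"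
  assumes "r \<ge> 1" "n \<ge> 1" "M \<in> matchings V E"
  shows "real (card {xs \<in> permutations_of_set E. M \<subseteq> G_omega V xs})
       = fact (card E) * (\<Sum>i=1..r. (-1) ^ (i - 1) * real (r choose i)
              / real ((n ^ r - (n - 1) ^ i * n ^ (r - i) + n - 1) choose n))"
    (is "_ = _ * ?F")
proof -
  obtain g where "M = perm_matching r n g"
    using matching_eq_perm_matching[OF assms(3)] assms(5) unfolding V_def E_def by metis
  then have card_M: "card M = n"
    using card_perm_matching[OF assms(3)] by simp
  have "card {xs \<in> permutations_of_set E. M \<subseteq> G_omega V xs} = (\<Sum>e\<in>M. card (completing_orders E M e))"
  proof (rule card_orders_containing_matching)
    show "finite E" "E \<subseteq> Pow V"
      unfolding V_def E_def by (simp_all add: finite_transversal_edges transversal_edges_subset_Pow)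
    show "is_matching V E M" "M \<noteq> {}"
      using assms(4,5) card_M unfolding matchings_def by auto
  qed
  then have "real (card {xs \<in> permutations_of_set E. M \<subseteq> G_omega V xs}) = (\<Sum>e\<in>M. fact (card E) / n * ?F)"
    using card_completing_orders_transversal_edges[OF assms(3) _ card_M] assms(5) unfolding V_def E_def by simp
  also have "\<dots> = fact (card E) * ?F"
    using card_M assms(4) by simp
  finally show ?thesis .
qed

theorem theorem2:
  fixes r n :: nat
  assumes "r \<ge> 2" and "n \<ge> 1"
  defines "V \<equiv> kpart_vertices r n"
  defines "E \<equiv> transversal_edges r n"
  shows "(\<Sum>xs\<in>permutations_of_set E. real (card (matchings V (G_omega V xs))))
           / real (card (permutations_of_set E))
         = real (fact n) ^ (r - 1) *
           (\<Sum>i=1..r. (-1) ^ (i - 1) * real (r choose i)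
              / real ((n ^ r - (n - 1) ^ i * n ^ (r - i) + n - 1) choose n))"
    (is "_ = _ * ?F")
proof -
  have "r \<ge> 1" "finite E"
    using assms(1) finite_transversal_edges unfolding E_def by auto
  have "(\<Sum>xs\<in>permutations_of_set E. real (card (matchings V (G_omega V xs))))
      = (\<Sum>M\<in>matchings V E. real (card {xs \<in> permutations_of_set E. M \<subseteq> G_omega V xs}))"
    using sum_card_matchings_G_omega[OF \<open>finite E\<close>, of V] by (simp flip: of_nat_sum)
  also have "\<dots> = (\<Sum>M\<in>matchings V E. fact (card E) * ?F)"
    using card_orders_containing_transversal_matching[OF \<open>r \<ge> 1\<close> assms(2)] unfolding V_def E_def by simp
  also have "\<dots> = real (fact n) ^ (r - 1) * fact (card E) * ?F"
    using card_matchings_transversal_edges[OF \<open>r \<ge> 1\<close>] unfolding V_def E_def by simp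
  finally show ?thesis
    using \<open>finite E\<close> by simp
qed

end
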